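(* Assume the setting below, in which $P=\{(x,y):Ax+Gy\le b\}$ is a translated polyhedral cone with apex $(x^*,y^* )$, $x^*\notin\mathbb{Z}^p$, and $cx+hy$ attains its maximum over $P$ uniquely at $(x^*,y^* )$ with value $\gamma^*$. For $r\in R$ define $d^r:=v^r_{1..m}A-v^r_{m+1}c\in\mathbb{Z}^p$ and $\delta^r:=\lfloor v^r_{1..m}b-v^r_{m+1}\gamma^*\rfloor+1\in\mathbb{Z}$. Then for every $x\in\mathbb{Z}^p$ there exists $r\in R$ with $d^rx\ge\delta^r$ (i.e. the inequalities $-d^rx\le-\delta^r$, $r\in R$, form a valid $|R|$-disjunction), and $d^rx^*<\delta^r$ for all $r\in R$ (the disjunction does not contain $x^*$).
   Context: Setting: $A\in\mathbb{Q}^{m\times p}$, $G\in\mathbb{Q}^{m\times q}$, $b\in\mathbb{Q}^m$, $c\in\mathbb{Q}^p$, $h\in\mathbb{Q}^q$ (row vectors), $P=\{(x,y)\in\mathbb{R}^{p+q}:Ax+Gy\le b\}$, $P_I=\mathrm{conv}\{(x,y)\in P:x\in\mathbb{Z}^p\}$. Let $Q=\{v=(v_{1..m},v_{m+1})\in\mathbb{R}^{m+1}: v_{1..m}G-v_{m+1}h=0,\ v\ge0\}$ (with $v_{1..m}$ a row vector in $\mathbb{R}^m$ and $v_{m+1}\in\mathbb{R}$), and let $\{v^r\}_{r\in R}$ ($R$ finite) contain exactly one representative of each extreme ray of $Q$, each scaled (possible since $Q$ is rational) so that $v^r_{1..m}A-v^r_{m+1}c\in\mathbb{Z}^p$. For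 any $\gamma$, the projection onto the $x$-space of $P_\gamma:=P\cap\{cx+hy\ge\gamma\}$ is $\{x: (v^r_{1..m}A-v^r_{m+1}c)x\le v^r_{1..m}b-v^r_{m+1}\gamma\ \forall r\in R\}$. *)

theory Defs
  imports "HOL-Analysis.Analysis"
begin

definition int_vec :: "real^'n \<Rightarrow> bool" where
  "int_vec x \<longleftrightarrow> (\<forall>j. x $ j \<in> \<int>)"

definition rat_vec :: "real^'n \<Rightarrow> bool" where
  "rat_vec x \<longleftrightarrow> (\<forall>j. x $ j \<in> \<rat>)"

definition rat_mat :: "real^'n^'m \<Rightarrow> bool" where
  "rat_mat M \<longleftrightarrow> (\<forall>i j. M $ i $ j \<in> \<rat>)"

definition polyh :: "real^'p^'m \<Rightarrow> real^'q^'m \<Rightarrow> real^'m \<Rightarrow> ((real^'p) \<times> (real^'q)) set" where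
  "polyh A G b = {(x, y). \<forall>i. (A *v x + G *v y) $ i \<le> b $ i}"

definition translated_cone_apex :: "'a::real_vector set \<Rightarrow> 'a \<Rightarrow> bool" where
  "translated_cone_apex S z \<longleftrightarrow> z \<in> S \<and> (\<forall>w\<in>S. \<forall>t\<ge>0. z + t *\<^sub>R (w - z) \<in> S)"

definition Qcone :: "real^'q^'m \<Rightarrow> real^'q \<Rightarrow> ((real^'m) \<times> real) set" where
  "Qcone G h = {(u, w). u v* G - w *\<^sub>R h = 0 \<and> (\<forall>i. u $ i \<ge> 0) \<and> w \<ge> 0}"

definition halfline :: "'a::real_vector \<Rightarrow> 'a set" where
  "halfline v = (\<lambda>t. t *\<^sub>R v) ` {0..}"

definition extreme_ray :: "'a::real_vector set \<Rightarrow> 'a \<Rightarrow> bool" where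
  "extreme_ray K v \<longleftrightarrow> v \<noteq> 0 \<and> halfline v face_of K"

end

theory Submission
  imports Defs
begin

(* Let gamma0 = c xs + h ys be the optimal value.  For v = (u, w) in the cone
   Q = {(u, w) >= 0 : u G = w h} write d(v) = u A - w c.  Summing the rows of A x + G y <= b
   with weights u and using u G = w h shows that d(v) x <= u b - w (c x + h y) is valid on P.
   At the apex this gives d(v) xs <= u b - w gamma0 < floor(u b - w gamma0) + 1, so the
   disjunction excludes xs.

   Conversely, let x be integral and violate every disjunct.  By integrality of d(V r) x it
   satisfies d(V r) x <= u b - w gamma0, hence (by scaling) the cut of every extreme ray of Q.
   The projection theorem then yields y with (x, y) in P and c x + h y >= gamma0: otherwise
   Farkas' lemma gives some v in Q whose cut x violates, and the Krein-Milman theorem, applied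
   to the compact base of the pointed cone Q, moves this violation to an extreme ray.  By
   uniqueness of the maximiser (x, y) is the apex, contradicting that xs is fractional. *)

lemma separation_from_finitely_generated_cone:
  fixes S :: "'a::euclidean_space set"
  assumes "finite S" and "\<beta> \<notin> convex_cone hull S"
  shows "\<exists>a. (\<forall>s\<in>S. 0 \<le> a \<bullet> s) \<and> a \<bullet> \<beta> < 0"
proof -
  let ?K = "convex_cone hull S"
  obtain a b where sep: "a \<bullet> \<beta> < b" "\<forall>k\<in>?K. b < a \<bullet> k"
    using separating_hyperplane_closed_point[OF convex_convex_cone_hull
        closed_convex_cone_hull[OF assms(1)] assms(2)] by blast
  have "b < 0" using sep(2) convex_cone_hull_contains_0 by fastforce
  have nonneg: "0 \<le> a \<bullet> k" if "k \<in> ?K" for k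
  proof (rule ccontr)
    assume "\<not> 0 \<le> a \<bullet> k"
    then have "(b / (a \<bullet> k)) *\<^sub>R k \<in> ?K" and "a \<bullet> ((b / (a \<bullet> k)) *\<^sub>R k) = b"
      using \<open>b < 0\<close> that by (auto intro!: convex_cone_hull_mul simp: divide_nonpos_neg)
    then show False using sep(2) by fastforce
  qed
  have "S \<subseteq> ?K" by (rule hull_subset)
  then have "\<forall>s\<in>S. 0 \<le> a \<bullet> s" using nonneg by blast
  moreover have "a \<bullet> \<beta> < 0" using sep(1) \<open>b < 0\<close> by linarith
  ultimately show ?thesis by blast
qed

lemma halfline_iff: "x \<in> halfline e \<longleftrightarrow> (\<exists>t\<ge>0. x = t *\<^sub>R e)"
  by (auto simp: halfline_def)

lemma halfline_self: "e \<in> halfline e"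
  unfolding halfline_iff by (intro exI[of _ 1]) simp

lemma convex_halfline: "convex (halfline (e :: 'a::real_normed_vector))"
  unfolding halfline_def
  using convex_linear_image[OF bounded_linear.linear[OF bounded_linear_scaleR_left],
      of "{0::real..}" e]
  by simp

lemma extreme_ray_mem: "extreme_ray K v \<Longrightarrow> v \<in> K"
  unfolding extreme_ray_def face_of_def using halfline_self by blast

text \<open>A pointed cone: a conic set K together with a functional \<open>\<phi>\<close> that is nonnegative on K
  and vanishes only at 0.  Its base \<open>K \<inter> {\<phi> = 1}\<close> meets every ray of K exactly once.\<close>
locale pointed_cone =
  fixes K :: "'a::euclidean_space set" and \<phi> :: 'a
  assumes conic: "conic K"
    and pos: "\<And>q. q \<in> K \<Longrightarrow> 0 \<le> q \<bullet> \<phi>"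
    and pos_zero: "\<And>q. q \<in> K \<Longrightarrow> q \<bullet> \<phi> = 0 \<Longrightarrow> q = 0"
begin

definition base :: "'a set" where
  "base = K \<inter> {q. q \<bullet> \<phi> = 1}"

lemma normalize_in_base:
  assumes "q \<in> K" and "q \<noteq> 0"
  shows "0 < q \<bullet> \<phi>" and "(1 / (q \<bullet> \<phi>)) *\<^sub>R q \<in> base"
proof -
  show "0 < q \<bullet> \<phi>" using pos pos_zero assms by force
  then show "(1 / (q \<bullet> \<phi>)) *\<^sub>R q \<in> base"
    using assms conic_mul[OF conic] by (simp add: base_def)
qed

text \<open>Normalising a and b into the base exhibits e as a combination of them.\<close>
lemma extreme_point_segment_on_ray:
  assumes ext: "e extreme_point_of base"
    and ab: "a \<in> K" "b \<in> K" and t: "0 \<le> t"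
    and \<mu>: "0 < \<mu>" "\<mu> < 1" and comb: "t *\<^sub>R e = (1 - \<mu>) *\<^sub>R a + \<mu> *\<^sub>R b"
  shows "a \<in> halfline e"
proof -
  have e: "e \<in> K" "e \<bullet> \<phi> = 1" using ext by (auto simp: extreme_point_of_def base_def)
  have t_eq: "t = (1 - \<mu>) * (a \<bullet> \<phi>) + \<mu> * (b \<bullet> \<phi>)"
    using arg_cong[OF comb, of "\<lambda>v. v \<bullet> \<phi>"] e by (simp add: inner_add_left)
  consider "a = 0" | "a \<noteq> 0" "b = 0" | "a \<noteq> 0" "b \<noteq> 0" by blast
  then show ?thesis
  proof cases
    case 1
    then show ?thesis by (auto simp: halfline_iff intro: exI[of _ 0])
  next
    case 2
    then have "(1 - \<mu>) *\<^sub>R a = t *\<^sub>R e" using comb by simp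
    then have "(1 / (1 - \<mu>)) *\<^sub>R ((1 - \<mu>) *\<^sub>R a) = (1 / (1 - \<mu>)) *\<^sub>R (t *\<^sub>R e)"
      by simp
    then have "a = (t / (1 - \<mu>)) *\<^sub>R e" using \<mu> by simp
    then show ?thesis using t \<mu> unfolding halfline_iff by (intro exI[of _ "t / (1 - \<mu>)"]) simp
  next
    case 3
    define sa sb where "sa = a \<bullet> \<phi>" and "sb = b \<bullet> \<phi>"
    have "0 < sa" "0 < sb" using 3 ab normalize_in_base by (auto simp: sa_def sb_def)
    define a' b' where "a' = (1 / sa) *\<^sub>R a" and "b' = (1 / sb) *\<^sub>R b"
    have base': "a' \<in> base" "b' \<in> base"
      using 3 ab normalize_in_base by (auto simp: a'_def b'_def sa_def sb_def)
    have parts: "0 < (1 - \<mu>) * sa" "0 < \<mu> * sb" using \<mu> \<open>0 < sa\<close> \<open>0 < sb\<close> by simp_all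
    have t_sum: "t = (1 - \<mu>) * sa + \<mu> * sb" using t_eq by (simp add: sa_def sb_def)
    define \<theta> where "\<theta> = (1 - \<mu>) * sa / t"
    have "0 < t" using parts t_sum by linarith
    have \<theta>: "0 < \<theta>" "\<theta> < 1" "1 - \<theta> = \<mu> * sb / t"
      using \<open>0 < t\<close> parts t_sum by (simp_all add: \<theta>_def divide_simps)
    have "e = (1 / t) *\<^sub>R (t *\<^sub>R e)" using \<open>0 < t\<close> by simp
    also have "\<dots> = \<theta> *\<^sub>R a' + (1 - \<theta>) *\<^sub>R b'"
      using \<open>0 < sa\<close> \<open>0 < sb\<close> \<theta>(3) unfolding comb
      by (simp add: \<theta>_def a'_def b'_def scaleR_add_right)
    finally have e_comb: "e = \<theta> *\<^sub>R a' + (1 - \<theta>) *\<^sub>R b'" .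
    have "a' = b'"
    proof (rule ccontr)
      assume "a' \<noteq> b'"
      then have "e \<in> open_segment a' b'"
        using \<theta> e_comb by (auto simp: in_segment intro!: exI[of _ "1 - \<theta>"])
      then show False using ext base' by (auto simp: extreme_point_of_def)
    qed
    then have "e = a'" using e_comb by (simp flip: scaleR_add_left)
    then have "a = sa *\<^sub>R e" using \<open>0 < sa\<close> by (simp add: a'_def)
    then show ?thesis using \<open>0 < sa\<close> unfolding halfline_iff by (intro exI[of _ sa]) simp
  qed
qed

lemma extreme_ray_of_extreme_point:
  assumes ext: "e extreme_point_of base"
  shows "extreme_ray K e"
proof -
  have e: "e \<in> K" "e \<bullet> \<phi> = 1" using ext by (auto simp: extreme_point_of_def base_def)
  have "halfline e face_of K"
    unfolding face_of_def
  proof (intro conjI ballI impI)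
    show "halfline e \<subseteq> K" using e(1) conic by (auto simp: halfline_iff conic_mul)
    show "convex (halfline e)" by (rule convex_halfline)
    fix a b x assume ab: "a \<in> K" "b \<in> K" and x: "x \<in> halfline e" "x \<in> open_segment a b"
    then obtain t \<mu> where t: "0 \<le> t" "x = t *\<^sub>R e"
      and \<mu>: "0 < \<mu>" "\<mu> < 1" "x = (1 - \<mu>) *\<^sub>R a + \<mu> *\<^sub>R b"
      by (auto simp: halfline_iff in_segment)
    show "a \<in> halfline e"
      using extreme_point_segment_on_ray[OF ext ab t(1) \<mu>(1,2)] t \<mu> by simp
    show "b \<in> halfline e"
      using extreme_point_segment_on_ray[OF ext ab(2,1) t(1), of "1 - \<mu>"] t \<mu>
      by (simp add: add.commute)
  qed
  moreover have "e \<noteq> 0" using e by auto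
  ultimately show ?thesis by (simp add: extreme_ray_def)
qed

text \<open>If the base is compact, a linear functional that is positive somewhere on K
  is positive on an extreme ray of K (Krein--Milman applied to the base).\<close>
lemma extreme_ray_positive:
  assumes "convex K" "closed K" "bounded base"
    and q: "q \<in> K" "0 < q \<bullet> g"
  shows "\<exists>e. extreme_ray K e \<and> 0 < e \<bullet> g"
proof (rule ccontr)
  assume none: "\<not> ?thesis"
  have base_eq: "base = K \<inter> {p. \<phi> \<bullet> p = 1}" by (auto simp: base_def inner_commute)
  have "compact base" "convex base"
    using assms(1-3) unfolding base_eq
    by (auto simp: compact_eq_bounded_closed closed_hyperplane convex_hyperplane
        intro: closed_Int convex_Int)
  then have "base = convex hull {p. p extreme_point_of base}"
    by (rule Krein_Milman_Minkowski)
  also have "\<dots> \<subseteq> {p. g \<bullet> p \<le> 0}"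
  proof (rule hull_minimal)
    show "{p. p extreme_point_of base} \<subseteq> {p. g \<bullet> p \<le> 0}"
      using none extreme_ray_of_extreme_point by (force simp: inner_commute)
  qed (rule convex_halfspace_le)
  finally have "(1 / (q \<bullet> \<phi>)) *\<^sub>R q \<bullet> g \<le> 0"
    using normalize_in_base q by (fastforce simp: inner_commute)
  moreover have "q \<noteq> 0" using q by auto
  ultimately show False using normalize_in_base(1)[OF q(1)] q(2)
    by (simp add: divide_le_0_iff)
qed

end

text \<open>The cone Q is the dual of a finite set: the vectors \<open>\<plusminus>(G e\<^sub>j, -h\<^sub>j)\<close> encode
  \<open>u G = w h\<close>, and the unit vectors encode \<open>u \<ge> 0, w \<ge> 0\<close>.\<close>
definition Qcone_gens :: "real^'q^'m \<Rightarrow> real^'q \<Rightarrow> ((real^'m) \<times> real) set" where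
  "Qcone_gens G h = range (\<lambda>j. (G *v axis j 1, - h $ j)) \<union> range (\<lambda>j. - (G *v axis j 1, - h $ j))
     \<union> range (\<lambda>i. (axis i 1, 0)) \<union> {(0, 1)}"

lemma Qcone_dual: "Qcone G h = {q. \<forall>s\<in>Qcone_gens G h. 0 \<le> q \<bullet> s}"
proof -
  have col: "(u v* G) $ j = u \<bullet> (G *v axis j 1)" for u j
    by (metis dot_lmul_matrix inner_axis mult.right_neutral inner_real_def)
  have "(u, w) \<in> Qcone G h \<longleftrightarrow> (\<forall>s\<in>Qcone_gens G h. 0 \<le> (u, w) \<bullet> s)" for u w
  proof -
    define X where "X j = u \<bullet> (G *v axis j 1) - w * h $ j" for j
    have "u v* G - w *\<^sub>R h = 0 \<longleftrightarrow> (\<forall>j. X j = 0)"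
      by (simp add: X_def vec_eq_iff col)
    also have "\<dots> \<longleftrightarrow> (\<forall>j. 0 \<le> X j \<and> 0 \<le> - X j)"
      by (simp add: order_eq_iff)
    finally have "(u, w) \<in> Qcone G h \<longleftrightarrow>
        (\<forall>j. 0 \<le> X j \<and> 0 \<le> - X j) \<and> (\<forall>i. 0 \<le> u $ i) \<and> 0 \<le> w"
      by (simp add: Qcone_def)
    also have "\<dots> \<longleftrightarrow> (\<forall>s\<in>Qcone_gens G h. 0 \<le> (u, w) \<bullet> s)"
      by (auto simp: Qcone_gens_def X_def ball_Un inner_Pair inner_axis)
    finally show ?thesis .
  qed
  then show ?thesis by auto
qed

text \<open>As an intersection of closed half-spaces Q is closed and convex.\<close>
lemma closed_Qcone: "closed (Qcone G h)" and convex_Qcone: "convex (Qcone G h)"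
proof -
  have "{q. 0 \<le> q \<bullet> s} = {q. s \<bullet> q \<ge> 0}" for s :: "(real^'m) \<times> real"
    by (simp add: inner_commute)
  then have eq: "Qcone G h = (\<Inter>s\<in>Qcone_gens G h. {q. s \<bullet> q \<ge> 0})"
    unfolding Qcone_dual by auto
  show "closed (Qcone G h)" unfolding eq by (simp add: closed_INT closed_halfspace_ge)
  show "convex (Qcone G h)" unfolding eq by (simp add: convex_INT convex_halfspace_ge)
qed

lemma Qcone_pointed: "pointed_cone (Qcone G h) ((\<chi> i. 1), 1)"
proof
  show "conic (Qcone G h)"
    unfolding conic_def Qcone_dual by (simp add: inner_scaleR_left mult_nonneg_nonneg)
  fix q assume q: "q \<in> Qcone G h"
  obtain u w where uw: "q = (u, w)" by fastforce
  have nonneg: "\<forall>i. 0 \<le> u $ i" "0 \<le> w" using q by (auto simp: Qcone_def uw)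
  have sum: "q \<bullet> ((\<chi> i. 1), 1) = (\<Sum>i\<in>UNIV. u $ i) + w"
    by (simp add: uw inner_Pair inner_vec_def)
  then show "0 \<le> q \<bullet> ((\<chi> i. 1), 1)" using nonneg by (simp add: sum_nonneg)
  assume "q \<bullet> ((\<chi> i. 1), 1) = 0"
  moreover have "0 \<le> (\<Sum>i\<in>UNIV. u $ i)" using nonneg by (simp add: sum_nonneg)
  ultimately have "(\<Sum>i\<in>UNIV. u $ i) = 0" "w = 0" using sum nonneg by linarith+
  then show "q = 0" using nonneg by (simp add: uw sum_nonneg_eq_0_iff vec_eq_iff zero_prod_def)
qed

text \<open>The base of Q lies in the unit ball (its points have coordinate sum 1).\<close>
lemma bounded_Qcone_base: "bounded (pointed_cone.base (Qcone G h) ((\<chi> i. 1), 1))"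
  unfolding bounded_iff
proof (intro exI ballI)
  fix q assume "q \<in> pointed_cone.base (Qcone G h) ((\<chi> i. 1), 1)"
  then have q: "q \<in> Qcone G h" "q \<bullet> ((\<chi> i. 1), 1) = 1"
    by (simp_all add: pointed_cone.base_def[OF Qcone_pointed])
  obtain u w where uw: "q = (u, w)" by fastforce
  have nonneg: "\<forall>i. 0 \<le> u $ i" "0 \<le> w" using q by (auto simp: Qcone_def uw)
  have "norm q \<le> norm u + norm w" unfolding uw by (rule norm_Pair_le)
  also have "\<dots> \<le> (\<Sum>i\<in>UNIV. \<bar>u $ i\<bar>) + norm w" using norm_le_l1_cart by simp
  also have "\<dots> = q \<bullet> ((\<chi> i. 1), 1)" using nonneg by (simp add: uw inner_Pair inner_vec_def)
  finally show "norm q \<le> 1" using q by simp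
qed

lemma Qcone_Farkas:
  fixes G :: "real^'q^'m" and h :: "real^'q"
  assumes infeasible: "\<not> (\<exists>y. (\<forall>i. (G *v y) $ i \<le> u $ i) \<and> - (h \<bullet> y) \<le> w)"
  shows "\<exists>q\<in>Qcone G h. q \<bullet> (u, w) < 0"
proof -
  define F where "F = {p. \<exists>y. (\<forall>i. (G *v y) $ i \<le> fst p $ i) \<and> - (h \<bullet> y) \<le> snd p}"
  have "convex_cone F"
    unfolding convex_cone_iff
  proof (intro conjI ballI allI impI)
    show "0 \<in> F" unfolding F_def by (auto simp: zero_prod_def intro!: exI[of _ 0])
    fix p p' assume "p \<in> F" "p' \<in> F"
    then obtain y y' where "\<forall>i. (G *v y) $ i \<le> fst p $ i" "- (h \<bullet> y) \<le> snd p"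
      and "\<forall>i. (G *v y') $ i \<le> fst p' $ i" "- (h \<bullet> y') \<le> snd p'"
      unfolding F_def by auto
    then show "p + p' \<in> F" unfolding F_def
      by (auto simp: matrix_vector_right_distrib inner_add_right add_mono intro!: exI[of _ "y + y'"])
  next
    fix p and c :: real assume "p \<in> F" "0 \<le> c"
    then obtain y where "\<forall>i. (G *v y) $ i \<le> fst p $ i" "- (h \<bullet> y) \<le> snd p"
      unfolding F_def by auto
    moreover have "c * - (h \<bullet> y) \<le> c * snd p" using calculation(2) \<open>0 \<le> c\<close> by (rule mult_left_mono)
    ultimately show "c *\<^sub>R p \<in> F" unfolding F_def using \<open>0 \<le> c\<close>
      by (auto simp: matrix_vector_mult_scaleR mult_left_mono intro!: exI[of _ "c *\<^sub>R y"])
  qed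
  moreover have "Qcone_gens G h \<subseteq> F"
  proof -
    have "(G *v axis j 1, - h $ j) \<in> F" for j
      unfolding F_def by (auto simp: inner_axis intro!: exI[of _ "axis j 1"])
    moreover have "- (G *v axis j 1, - h $ j) \<in> F" for j
    proof -
      have "G *v (- axis j 1) = - (G *v axis j 1)"
        using matrix_vector_mult_scaleR[of G "-1" "axis j 1"] by simp
      then show ?thesis unfolding F_def by (auto simp: inner_axis intro!: exI[of _ "- axis j 1"])
    qed
    moreover have "(axis i 1, 0) \<in> F" for i
      unfolding F_def by (auto simp: axis_def intro!: exI[of _ 0])
    moreover have "(0, 1) \<in> F" unfolding F_def by (auto intro!: exI[of _ 0])
    ultimately show ?thesis by (auto simp: Qcone_gens_def)
  qed
  ultimately have "convex_cone hull Qcone_gens G h \<subseteq> F" by (rule hull_minimal[rotated])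
  moreover have "(u, w) \<notin> F" using infeasible by (simp add: F_def)
  ultimately have "(u, w) \<notin> convex_cone hull Qcone_gens G h" by blast
  moreover have "finite (Qcone_gens G h)" by (simp add: Qcone_gens_def)
  ultimately obtain q where "\<forall>s\<in>Qcone_gens G h. 0 \<le> q \<bullet> s" "q \<bullet> (u, w) < 0"
    using separation_from_finitely_generated_cone by blast
  then show ?thesis unfolding Qcone_dual by blast
qed

definition cut_coeff :: "real^'p^'m \<Rightarrow> real^'p \<Rightarrow> (real^'m) \<times> real \<Rightarrow> real^'p" where
  "cut_coeff A c v = fst v v* A - snd v *\<^sub>R c"

definition cut_rhs :: "real^'m \<Rightarrow> real \<Rightarrow> (real^'m) \<times> real \<Rightarrow> real" where
  "cut_rhs b \<gamma> v = fst v \<bullet> b - snd v * \<gamma>"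

lemma cut_slack: "cut_rhs b \<gamma> v - cut_coeff A c v \<bullet> x = v \<bullet> (b - A *v x, c \<bullet> x - \<gamma>)"
  by (cases v) (simp add: cut_rhs_def cut_coeff_def inner_Pair inner_diff_left inner_diff_right
      dot_lmul_matrix algebra_simps)

lemma cut_valid:
  assumes v: "v \<in> Qcone G h" and P: "(x, y) \<in> polyh A G b"
  shows "cut_coeff A c v \<bullet> x \<le> cut_rhs b (c \<bullet> x + h \<bullet> y) v"
proof -
  obtain u w where uw: "v = (u, w)" by fastforce
  have nonneg: "\<forall>i. 0 \<le> u $ i" and uG: "u v* G = w *\<^sub>R h" using v by (auto simp: Qcone_def uw)
  have "u \<bullet> (A *v x + G *v y) \<le> u \<bullet> b"
    using P nonneg unfolding polyh_def inner_vec_def by (auto intro!: sum_mono mult_left_mono)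
  moreover have "u \<bullet> (G *v y) = w * (h \<bullet> y)" using uG by (metis dot_lmul_matrix inner_scaleR_left)
  ultimately show ?thesis
    by (simp add: uw cut_coeff_def cut_rhs_def inner_diff_left inner_add_right dot_lmul_matrix
        algebra_simps)
qed

text \<open>Cuts scale with v, so a cut of v carries over to every point of its half-line.\<close>
lemma cut_on_halfline:
  assumes "cut_coeff A c v \<bullet> x \<le> cut_rhs b \<gamma> v" and "e \<in> halfline v"
  shows "cut_coeff A c e \<bullet> x \<le> cut_rhs b \<gamma> e"
proof -
  obtain t where "0 \<le> t" "e = t *\<^sub>R v" using assms(2) by (auto simp: halfline_def)
  then show ?thesis using mult_left_mono[OF assms(1), of t]
    by (cases v) (simp add: cut_coeff_def cut_rhs_def inner_diff_left dot_lmul_matrix algebra_simps)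
qed

text \<open>Projection theorem: if x satisfies the cuts of all extreme rays of Q, then x lies in the
  projection of \<open>P \<inter> {c x + h y \<ge> \<gamma>}\<close> (Farkas plus the extreme ray lemma).\<close>
lemma level_set_projection:
  assumes cuts: "\<forall>e. extreme_ray (Qcone G h) e \<longrightarrow> cut_coeff A c e \<bullet> x \<le> cut_rhs b \<gamma> e"
  shows "\<exists>y. (x, y) \<in> polyh A G b \<and> \<gamma> \<le> c \<bullet> x + h \<bullet> y"
proof (rule ccontr)
  let ?r = "(b - A *v x, c \<bullet> x - \<gamma>)"
  assume "\<not> ?thesis"
  then have "\<not> (\<exists>y. (\<forall>i. (G *v y) $ i \<le> (b - A *v x) $ i) \<and> - (h \<bullet> y) \<le> c \<bullet> x - \<gamma>)"
    by (auto simp: polyh_def algebra_simps)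
  from Qcone_Farkas[OF this] obtain q where q: "q \<in> Qcone G h" "q \<bullet> ?r < 0" by blast
  then have "0 < q \<bullet> (- ?r)" by (simp only: inner_minus_right neg_0_less_iff_less)
  then obtain e where e: "extreme_ray (Qcone G h) e" "0 < e \<bullet> (- ?r)"
    using pointed_cone.extreme_ray_positive[OF Qcone_pointed convex_Qcone closed_Qcone
        bounded_Qcone_base q(1)] by blast
  have "cut_rhs b \<gamma> e - cut_coeff A c e \<bullet> x < 0"
    using e(2) unfolding cut_slack inner_minus_right by linarith
  then show False using cuts e(1) by fastforce
qed

lemma int_vec_inner: "int_vec d \<Longrightarrow> int_vec x \<Longrightarrow> d \<bullet> x \<in> \<int>"
  unfolding int_vec_def inner_vec_def by (auto intro: Ints_mult)

lemma Ints_less_floor_succ: "k \<in> \<int> \<Longrightarrow> k < of_int (\<lfloor>z\<rfloor> + 1) \<Longrightarrow> k \<le> (z::real)"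
  by (metis Ints_cases le_floor_iff of_int_less_iff zle_add1_eq_le)

theorem lemma2p12:
  fixes A :: "real^'p^'m" and G :: "real^'q^'m" and b :: "real^'m"
    and c :: "real^'p" and h :: "real^'q"
    and xs :: "real^'p" and ys :: "real^'q"
    and R :: "'r set" and V :: "'r \<Rightarrow> (real^'m) \<times> real"
  assumes rat: "rat_mat A" "rat_mat G" "rat_vec b" "rat_vec c" "rat_vec h"
    and cone: "translated_cone_apex (polyh A G b) (xs, ys)"
    and frac: "\<not> int_vec xs"
    and uniq_max: "\<forall>(x, y) \<in> polyh A G b. (x, y) \<noteq> (xs, ys) \<longrightarrow> c \<bullet> x + h \<bullet> y < c \<bullet> xs + h \<bullet> ys"
    and finR: "finite R"
    and Vext: "\<forall>r\<in>R. extreme_ray (Qcone G h) (V r)"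
    and Vrep: "\<forall>v. extreme_ray (Qcone G h) v \<longrightarrow> (\<exists>!r. r \<in> R \<and> halfline (V r) = halfline v)"
    and Vint: "\<forall>r\<in>R. int_vec (fst (V r) v* A - snd (V r) *\<^sub>R c)"
  shows "(\<forall>x. int_vec x \<longrightarrow>
            (\<exists>r\<in>R. (fst (V r) v* A - snd (V r) *\<^sub>R c) \<bullet> x \<ge>
               of_int (\<lfloor>fst (V r) \<bullet> b - snd (V r) * (c \<bullet> xs + h \<bullet> ys)\<rfloor> + 1)))
       \<and> (\<forall>r\<in>R. (fst (V r) v* A - snd (V r) *\<^sub>R c) \<bullet> xs <
               of_int (\<lfloor>fst (V r) \<bullet> b - snd (V r) * (c \<bullet> xs + h \<bullet> ys)\<rfloor> + 1))"
proof -
  define \<gamma> where "\<gamma> = c \<bullet> xs + h \<bullet> ys"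
  have apex: "(xs, ys) \<in> polyh A G b" using cone by (simp add: translated_cone_apex_def)
  have excluded: "cut_coeff A c (V r) \<bullet> xs < of_int (\<lfloor>cut_rhs b \<gamma> (V r)\<rfloor> + 1)" if "r \<in> R" for r
  proof -
    have "V r \<in> Qcone G h" using Vext that extreme_ray_mem by blast
    from cut_valid[OF this apex, of c] show ?thesis
      unfolding \<gamma>_def using real_of_int_floor_add_one_gt by (simp add: order_le_less_trans)
  qed
  have covered: "\<exists>r\<in>R. of_int (\<lfloor>cut_rhs b \<gamma> (V r)\<rfloor> + 1) \<le> cut_coeff A c (V r) \<bullet> x"
    if x: "int_vec x" for x
  proof (rule ccontr)
    assume "\<not> ?thesis"
    then have "cut_coeff A c (V r) \<bullet> x \<le> cut_rhs b \<gamma> (V r)" if "r \<in> R" for r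
      using Ints_less_floor_succ int_vec_inner Vint x that by (force simp: cut_coeff_def not_le)
    then have "\<forall>e. extreme_ray (Qcone G h) e \<longrightarrow> cut_coeff A c e \<bullet> x \<le> cut_rhs b \<gamma> e"
      using Vrep cut_on_halfline halfline_self by metis
    then obtain y where "(x, y) \<in> polyh A G b" "\<gamma> \<le> c \<bullet> x + h \<bullet> y"
      using level_set_projection by blast
    then have "(x, y) = (xs, ys)" using uniq_max by (force simp: \<gamma>_def)
    then show False using frac x by simp
  qed
  show ?thesis using covered excluded by (auto simp: cut_coeff_def cut_rhs_def \<gamma>_def)
qed

end
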